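(* Let $\mathcal{I}$ be an interpreted system, $\mathit{Prop}$ a set of atomic propositions, $S$ and $T$ indexical sets of agents in $\mathcal{I}$, and $\approx$ a synchronous epistemic bisimulation on $\mathcal{I}$ with respect to $\mathit{Prop}$ such that (a) $S\subseteq T$ is valid in $\mathcal{I}$, and (b) for every point $(r,m)$ of $\mathcal{I}$ there exists a point $(r',m)$ with $(r,m)\approx(r',m)$ and $S(r',m)=T(r,m)$. Then for every $p\in\mathit{Prop}$ and every agent $i$, the formula $B^S_i\,CB_S\,p\Leftrightarrow B^T_i\,CB_T\,p$ is valid in $\mathcal{I}$.
   Context: Agents $\mathrm{Agt}=\{1,\dots,n\}$. An interpreted system $\mathcal{I}=(\mathcal{R},\pi)$ consists of a set of runs (functions from times $\mathbb{N}$ to global states $(s_e,s_1,\dots,s_n)$) and an interpretation $\pi$ giving the atomic propositions true at each point $(r,m)$; $r_i(m)$ is agent $i$'s local state; $(r,m)\sim_i(r',m')$ iff $r_i(m)=r'_i(m')$; $K_i\phi$ holds at $(r,m)$ iff $\phi$ holds at all $(r',m')\sim_i(r,m)$. An indexical set $S$ assigns $S(r,m)\subseteq\mathrm{Agt}$ to each point; $i\in S$ holds at $(r,m)$ iff $i\in S(r,m)$; $S\subseteq T$ is valid if $S(r,m)\subseteq T(r,m)$ at every point. $B^S_i\phi:=K_i(i\in S\Rightarrow\phi)$; $E^B_S\phi:=\bigwedge_{i\in S}B^S_i\phi$ (over $i\in S(r,m)$ at the point of evaluation); $CB_S\phi:=\bigwedge_{k\ge1}(E^B_S)^k\phi$.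 A synchronous epistemic bisimulation on $\mathcal{I}$ with respect to $\mathit{Prop}$ is a relation $\approx$ on points such that whenever $(r,m)\approx(r',m')$: $m=m'$; for all $p\in\mathit{Prop}$, $p$ holds at $(r,m)$ iff it holds at $(r',m)$; and $(r,m)\sim_i(r',m)$ for every agent $i$. A formula is valid in $\mathcal{I}$ if it holds at every point. *)

theory Defs
  imports Main
begin

text \<open>Agents are 1..n. A global state is (s_e, s) where s i is the local state of agent i.
  A run maps times to global states; a point is (run, time).\<close>

type_synonym ('e,'l) gstate = "'e \<times> (nat \<Rightarrow> 'l)"
type_synonym ('e,'l) run = "nat \<Rightarrow> ('e,'l) gstate"
type_synonym ('e,'l) point = "('e,'l) run \<times> nat"

definition Agt :: "nat \<Rightarrow> nat set" where
  "Agt n = {1..n}"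

definition points :: "('e,'l) run set \<Rightarrow> ('e,'l) point set" where
  "points R = {(r, m). r \<in> R}"

definition lstate :: "('e,'l) run \<Rightarrow> nat \<Rightarrow> nat \<Rightarrow> 'l" where
  "lstate r i m = snd (r m) i"

definition indist :: "nat \<Rightarrow> ('e,'l) point \<Rightarrow> ('e,'l) point \<Rightarrow> bool" where
  "indist i pt pt' = (lstate (fst pt) i (snd pt) = lstate (fst pt') i (snd pt'))"

definition Kn :: "('e,'l) run set \<Rightarrow> nat \<Rightarrow> (('e,'l) point \<Rightarrow> bool) \<Rightarrow> ('e,'l) point \<Rightarrow> bool" where
  "Kn R i \<phi> pt = (\<forall>pt' \<in> points R. indist i pt pt' \<longrightarrow> \<phi> pt')"

definition Bel :: "('e,'l) run set \<Rightarrow> (('e,'l) point \<Rightarrow> nat set) \<Rightarrow> nat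
    \<Rightarrow> (('e,'l) point \<Rightarrow> bool) \<Rightarrow> ('e,'l) point \<Rightarrow> bool" where
  "Bel R S i \<phi> = Kn R i (\<lambda>pt. i \<in> S pt \<longrightarrow> \<phi> pt)"

definition EB :: "('e,'l) run set \<Rightarrow> (('e,'l) point \<Rightarrow> nat set)
    \<Rightarrow> (('e,'l) point \<Rightarrow> bool) \<Rightarrow> ('e,'l) point \<Rightarrow> bool" where
  "EB R S \<phi> pt = (\<forall>i \<in> S pt. Bel R S i \<phi> pt)"

definition CB :: "('e,'l) run set \<Rightarrow> (('e,'l) point \<Rightarrow> nat set)
    \<Rightarrow> (('e,'l) point \<Rightarrow> bool) \<Rightarrow> ('e,'l) point \<Rightarrow> bool" where
  "CB R S \<phi> pt = (\<forall>k \<ge> 1. ((EB R S) ^^ k) \<phi> pt)"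

definition atom :: "(('e,'l) point \<Rightarrow> 'p set) \<Rightarrow> 'p \<Rightarrow> ('e,'l) point \<Rightarrow> bool" where
  "atom \<pi> p pt = (p \<in> \<pi> pt)"

definition valid :: "('e,'l) run set \<Rightarrow> (('e,'l) point \<Rightarrow> bool) \<Rightarrow> bool" where
  "valid R \<phi> = (\<forall>pt \<in> points R. \<phi> pt)"

definition indexical :: "nat \<Rightarrow> ('e,'l) run set \<Rightarrow> (('e,'l) point \<Rightarrow> nat set) \<Rightarrow> bool" where
  "indexical n R S = (\<forall>pt \<in> points R. S pt \<subseteq> Agt n)"

definition sync_bisim :: "nat \<Rightarrow> ('e,'l) run set \<Rightarrow> (('e,'l) point \<Rightarrow> 'p set) \<Rightarrow> 'p set
    \<Rightarrow> (('e,'l) point \<Rightarrow> ('e,'l) point \<Rightarrow> bool) \<Rightarrow> bool" where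
  "sync_bisim n R \<pi> Prop rel =
    (\<forall>r m r' m'. rel (r, m) (r', m') \<longrightarrow>
        (r, m) \<in> points R \<and> (r', m') \<in> points R \<and>
        m = m' \<and>
        (\<forall>p \<in> Prop. p \<in> \<pi> (r, m) \<longleftrightarrow> p \<in> \<pi> (r', m)) \<and>
        (\<forall>i \<in> Agt n. indist i (r, m) (r', m)))"

end

theory Submission
  imports Defs
begin

text \<open>If \<open>S \<subseteq> T\<close>, every agent of \<open>S\<close> is an agent of \<open>T\<close>, so each level of \<open>T\<close>-belief
  implies the same level of \<open>S\<close>-belief; this gives the direction from \<open>T\<close> to \<open>S\<close>.
  Conversely, hypothesis (b) replaces each point \<open>z\<close> by a bisimilar point \<open>z'\<close> with
  \<open>S z' = T z\<close>. Nobody can tell \<open>z\<close> and \<open>z'\<close> apart and they agree on \<open>p\<close>, so an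
  \<open>S\<close>-belief at \<open>z'\<close> is a \<open>T\<close>-belief at \<open>z\<close>; induction on the nesting depth of
  \<open>E\<^sup>B\<close> lifts this to common belief.\<close>

lemma indist_trans: "indist i x y \<Longrightarrow> indist i y z \<Longrightarrow> indist i x z"
  unfolding indist_def by simp

lemma indist_sym: "indist i x y \<Longrightarrow> indist i y x"
  unfolding indist_def by simp

lemma sync_bisim_points:
  assumes "sync_bisim n R \<pi> Prop rel" and "rel y y'"
  shows "y \<in> points R" and "y' \<in> points R"
  using assms unfolding sync_bisim_def by (metis prod.collapse)+

lemma sync_bisim_indist:
  assumes "sync_bisim n R \<pi> Prop rel" and "rel y y'" and "i \<in> Agt n"
  shows "indist i y y'"
proof -
  obtain r m r' m' where yy': "y = (r, m)" "y' = (r', m')" by fastforce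
  with assms have "m' = m" unfolding sync_bisim_def by blast
  with assms yy' show ?thesis unfolding sync_bisim_def by auto
qed

lemma sync_bisim_atom:
  assumes "sync_bisim n R \<pi> Prop rel" and "rel y y'" and "p \<in> Prop"
  shows "atom \<pi> p y' \<longleftrightarrow> atom \<pi> p y"
proof -
  obtain r m r' m' where "y = (r, m)" "y' = (r', m')" by fastforce
  with assms show ?thesis unfolding sync_bisim_def atom_def by auto
qed

lemma EB_iff:
  "EB R S \<phi> y \<longleftrightarrow> (\<forall>i \<in> S y. \<forall>z \<in> points R. indist i y z \<longrightarrow> i \<in> S z \<longrightarrow> \<phi> z)"
  unfolding EB_def Bel_def Kn_def by blast

lemma EB_power_antimono:
  assumes sub: "\<forall>z \<in> points R. S z \<subseteq> T z"
  shows "y \<in> points R \<Longrightarrow> (EB R T ^^ k) \<phi> y \<Longrightarrow> (EB R S ^^ k) \<phi> y"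
proof (induction k arbitrary: y)
  case 0
  then show ?case by simp
next
  case (Suc k)
  have "(EB R T ^^ k) \<phi> z"
    if "a \<in> S y" "z \<in> points R" "indist a y z" "a \<in> S z" for a z
    using Suc.prems sub that unfolding funpow.simps comp_def EB_iff by blast
  with Suc.IH show ?case
    unfolding funpow.simps comp_def EB_iff by blast
qed

lemma CB_antimono:
  "\<forall>z \<in> points R. S z \<subseteq> T z \<Longrightarrow> y \<in> points R \<Longrightarrow> CB R T \<phi> y \<Longrightarrow> CB R S \<phi> y"
  unfolding CB_def using EB_power_antimono by blast

lemma Bel_CB_antimono:
  assumes "\<forall>z \<in> points R. S z \<subseteq> T z" and "Bel R T i (CB R T \<phi>) x"
  shows "Bel R S i (CB R S \<phi>) x"
  using assms CB_antimono unfolding Bel_def Kn_def by blast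

lemma EB_power_transfer:
  assumes T: "indexical n R T"
    and bisim: "sync_bisim n R \<pi> Prop rel"
    and rich: "\<forall>z \<in> points R. \<exists>z'. rel z z' \<and> S z' = T z"
    and invariant: "\<forall>y y'. rel y y' \<longrightarrow> \<phi> y' \<longrightarrow> \<phi> y"
  shows "rel y y' \<Longrightarrow> S y' = T y \<Longrightarrow> (EB R S ^^ k) \<phi> y' \<Longrightarrow> (EB R T ^^ k) \<phi> y"
proof (induction k arbitrary: y y')
  case 0
  then show ?case using invariant by (simp only: funpow_0)
next
  case (Suc k)
  have "(EB R T ^^ k) \<phi> z"
    if a: "a \<in> T y" and z: "z \<in> points R" "indist a y z" "a \<in> T z" for a z
  proof -
    obtain z' where z': "rel z z'" "S z' = T z" using rich z by blast
    have "a \<in> Agt n"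
      using T a sync_bisim_points(1)[OF bisim Suc.prems(1)] unfolding indexical_def by blast
    then have "indist a y' z'"
      using sync_bisim_indist[OF bisim] Suc.prems(1) z z' indist_sym indist_trans by metis
    moreover have "a \<in> S y'" "a \<in> S z'" "z' \<in> points R"
      using Suc.prems(2) a z z' sync_bisim_points(2)[OF bisim] by auto
    ultimately have "(EB R S ^^ k) \<phi> z'"
      using Suc.prems(3) unfolding funpow.simps comp_def EB_iff by blast
    with Suc.IH z' show ?thesis by blast
  qed
  then show ?case
    unfolding funpow.simps comp_def EB_iff by blast
qed

lemma Bel_CB_transfer:
  assumes T: "indexical n R T"
    and bisim: "sync_bisim n R \<pi> Prop rel"
    and rich: "\<forall>z \<in> points R. \<exists>z'. rel z z' \<and> S z' = T z"
    and invariant: "\<forall>y y'. rel y y' \<longrightarrow> \<phi> y' \<longrightarrow> \<phi> y"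
    and i: "i \<in> Agt n"
    and bel: "Bel R S i (CB R S \<phi>) x"
  shows "Bel R T i (CB R T \<phi>) x"
  unfolding Bel_def Kn_def
proof (intro ballI impI)
  fix y assume y: "y \<in> points R" "indist i x y" "i \<in> T y"
  obtain y' where y': "rel y y'" "S y' = T y" using rich y by blast
  have "indist i x y'"
    using y y' sync_bisim_indist[OF bisim _ i] indist_trans by blast
  then have "CB R S \<phi> y'"
    using bel y y' sync_bisim_points(2)[OF bisim] unfolding Bel_def Kn_def by auto
  then show "CB R T \<phi> y"
    using EB_power_transfer[OF T bisim rich invariant y'] unfolding CB_def by blast
qed

theorem proposition10:
  fixes n :: nat
    and R :: "('e,'l) run set"
    and \<pi> :: "('e,'l) point \<Rightarrow> 'p set"
    and Prop :: "'p set"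
    and S T :: "('e,'l) point \<Rightarrow> nat set"
    and rel :: "('e,'l) point \<Rightarrow> ('e,'l) point \<Rightarrow> bool"
  assumes "indexical n R S" and "indexical n R T"
    and "sync_bisim n R \<pi> Prop rel"
    and "\<forall>pt \<in> points R. S pt \<subseteq> T pt"
    and "\<forall>r m. (r, m) \<in> points R \<longrightarrow>
           (\<exists>r'. rel (r, m) (r', m) \<and> S (r', m) = T (r, m))"
  shows "\<forall>p \<in> Prop. \<forall>i \<in> Agt n.
           valid R (\<lambda>pt. Bel R S i (CB R S (atom \<pi> p)) pt
                        \<longleftrightarrow> Bel R T i (CB R T (atom \<pi> p)) pt)"
proof (intro ballI)
  \<comment> \<open>\<open>S\<close> need not be indexical: only agents of \<open>T\<close> must lie in \<open>Agt n\<close>.\<close>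
  fix p i assume p: "p \<in> Prop" and i: "i \<in> Agt n"
  have rich: "\<forall>z \<in> points R. \<exists>z'. rel z z' \<and> S z' = T z"
    using assms(5) by fastforce
  have invariant: "\<forall>y y'. rel y y' \<longrightarrow> atom \<pi> p y' \<longrightarrow> atom \<pi> p y"
    using sync_bisim_atom[OF assms(3) _ p] by blast
  show "valid R (\<lambda>pt. Bel R S i (CB R S (atom \<pi> p)) pt
                        \<longleftrightarrow> Bel R T i (CB R T (atom \<pi> p)) pt)"
    unfolding valid_def
    using Bel_CB_transfer[OF assms(2,3) rich invariant i] Bel_CB_antimono[OF assms(4)]
    by blast
qed

end
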